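(* There is a linear-time property $\varphi$ (over a finite alphabet $\Sigma$) such that, for every bound $n\in\mathbb{N}$, every safety automaton $\mathcal{A}$ with $L(\mathcal{A})\subseteq\varphi$ and $L_n(L(\mathcal{A}))=L_n(\varphi)$ has at least $n$ states.
   Context: A linear-time property over $\Sigma$ is a set $\varphi\subseteq\Sigma^\omega$. A lasso of length $n$ is a pair $(u,v)$ with $u\in\Sigma^*$, $v\in\Sigma^+$, $|u\cdot v|=n$, inducing $u\cdot v^\omega$. For $\psi\subseteq\Sigma^\omega$, $L_n(\psi)=\{u\cdot v^\omega \in \psi \mid u\in\Sigma^*, v\in\Sigma^+, |u\cdot v|=n\}$. A (nondeterministic) safety automaton is $(Q,Q_0,\delta)$ with finite state set $Q$, initial states $Q_0\subseteq Q$, and $\delta:Q\times\Sigma\to\mathcal{P}(Q)$; it accepts an infinite word iff there is an infinite run $q_0q_1\cdots$ with $q_0\in Q_0$ and $q_{i+1}\in\delta(q_i,\alpha_{i+1})$ on it. $L(\mathcal{A})$ is the accepted language. *)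

theory Defs
  imports "HOL-Library.Omega_Words_Fun"
begin

definition omega_words :: "'a set \<Rightarrow> 'a word set" where
  "omega_words \<Sigma> = {w. \<forall>i. w i \<in> \<Sigma>}"

definition lassos_n :: "'a set \<Rightarrow> nat \<Rightarrow> 'a word set \<Rightarrow> 'a word set" where
  "lassos_n \<Sigma> n \<psi> = {w \<in> \<psi>. \<exists>u v. set u \<subseteq> \<Sigma> \<and> set v \<subseteq> \<Sigma> \<and> v \<noteq> [] \<and>
      length u + length v = n \<and> w = u \<frown> v\<^sup>\<omega>}"

(* A safety automaton (Q, Q0, delta) over Sigma; states are natural numbers
   (every finite state set is isomorphic to a finite set of naturals). *)
definition safety_automaton ::
  "'a set \<Rightarrow> nat set \<Rightarrow> nat set \<Rightarrow> (nat \<Rightarrow> 'a \<Rightarrow> nat set) \<Rightarrow> bool" where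
  "safety_automaton \<Sigma> Q Q0 \<delta> \<longleftrightarrow> finite Q \<and> Q0 \<subseteq> Q \<and>
      (\<forall>q\<in>Q. \<forall>a\<in>\<Sigma>. \<delta> q a \<subseteq> Q)"

definition sa_lang ::
  "'a set \<Rightarrow> nat set \<Rightarrow> (nat \<Rightarrow> 'a \<Rightarrow> nat set) \<Rightarrow> 'a word set" where
  "sa_lang \<Sigma> Q0 \<delta> = {w \<in> omega_words \<Sigma>. \<exists>r :: nat \<Rightarrow> nat.
      r 0 \<in> Q0 \<and> (\<forall>i. r (Suc i) \<in> \<delta> (r i) (w i))}"

end

theory Submission
  imports Defs
begin

text \<open>Take \<open>\<phi> = {0\<^sup>k 1\<^sup>\<omega> | k \<in> \<nat>}\<close> over \<open>{0, 1}\<close>. An automaton agreeing with \<open>\<phi>\<close>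
  on lassos of length \<open>n > 0\<close> accepts the lasso \<open>0\<^sup>k 1\<^sup>\<omega>\<close> with \<open>k = n - 1\<close>. If an
  accepting run on it repeated a state among its first \<open>n\<close> positions, the loop between the
  two visits would read only \<open>0\<close>s and could be pumped forever, so \<open>0\<^sup>\<omega> \<notin> \<phi>\<close> would be
  accepted. Hence the run visits \<open>n\<close> distinct states.\<close>

definition loop_index :: "nat \<Rightarrow> nat \<Rightarrow> nat \<Rightarrow> nat" where
  "loop_index i j t = (if t < i then t else i + (t - i) mod (j - i))"

lemma loop_index_0 [simp]: "loop_index i j 0 = 0"
  by (simp add: loop_index_def)

lemma loop_index_less:
  assumes "i < j"
  shows "loop_index i j t < j"
proof -
  have "(t - i) mod (j - i) < j - i"
    using assms by simp
  then have "i + (t - i) mod (j - i) < j"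
    by linarith
  then show ?thesis
    using assms by (simp add: loop_index_def)
qed

lemma loop_index_Suc:
  assumes "i < j"
  shows "loop_index i j (Suc t) =
    (if Suc (loop_index i j t) = j then i else Suc (loop_index i j t))"
proof (cases "Suc t \<le> i")
  case True
  then show ?thesis using assms by (auto simp: loop_index_def)
next
  case False
  then have "Suc t - i = Suc (t - i)" by simp
  then show ?thesis
    using False assms by (auto simp: loop_index_def mod_Suc)
qed

lemma run_in_states:
  assumes "safety_automaton \<Sigma> Q Q0 \<delta>" "r 0 \<in> Q0"
    and "\<forall>t. r (Suc t) \<in> \<delta> (r t) (w t)" "w \<in> omega_words \<Sigma>"
  shows "r t \<in> Q"
proof (induction t)
  case 0
  then show ?case using assms by (auto simp: safety_automaton_def)
next
  case (Suc t)
  then show ?case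
    using assms unfolding safety_automaton_def omega_words_def by blast
qed

text \<open>\<open>w \<circ> loop_index i j\<close> is the lasso \<open>u v\<^sup>\<omega>\<close> where \<open>u\<close> and \<open>v\<close> are the letters of \<open>w\<close> at
  positions \<open>[0, i)\<close> and \<open>[i, j)\<close>; if a run of \<open>w\<close> is in the same state at \<open>i\<close> and \<open>j\<close>,
  composing it with \<open>loop_index i j\<close> gives a run of the lasso.\<close>

lemma sa_lang_pump:
  assumes w: "w \<in> omega_words \<Sigma>"
    and run: "r 0 \<in> Q0" "\<forall>t. r (Suc t) \<in> \<delta> (r t) (w t)"
    and "i < j" "r i = r j"
  shows "w \<circ> loop_index i j \<in> sa_lang \<Sigma> Q0 \<delta>"
proof -
  let ?f = "loop_index i j"
  have "r (?f (Suc t)) = r (Suc (?f t))" for t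
    using \<open>r i = r j\<close> loop_index_Suc[OF \<open>i < j\<close>] by metis
  then have "\<forall>t. (r \<circ> ?f) (Suc t) \<in> \<delta> ((r \<circ> ?f) t) ((w \<circ> ?f) t)"
    using run(2) by simp
  moreover have "w \<circ> ?f \<in> omega_words \<Sigma>"
    using w by (simp add: omega_words_def)
  moreover have "(r \<circ> ?f) 0 \<in> Q0"
    using run(1) by simp
  ultimately show ?thesis
    unfolding sa_lang_def by blast
qed

lemma card_states_ge_if_no_pump:
  assumes sa: "safety_automaton \<Sigma> Q Q0 \<delta>" and w: "w \<in> sa_lang \<Sigma> Q0 \<delta>"
    and no_pump: "\<And>i j. i < j \<Longrightarrow> j < n \<Longrightarrow> w \<circ> loop_index i j \<notin> sa_lang \<Sigma> Q0 \<delta>"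
  shows "n \<le> card Q"
proof -
  obtain r where run: "r 0 \<in> Q0" "\<forall>t. r (Suc t) \<in> \<delta> (r t) (w t)"
    and w_words: "w \<in> omega_words \<Sigma>"
    using w unfolding sa_lang_def by blast
  have "inj_on r {..<n}"
  proof (rule linorder_inj_onI')
    fix i j
    assume "i \<in> {..<n}" "j \<in> {..<n}" "i < j"
    then show "r i \<noteq> r j"
      using no_pump sa_lang_pump[OF w_words run] by auto
  qed
  moreover have "r ` {..<n} \<subseteq> Q"
    using run_in_states[OF sa run w_words] by blast
  moreover have "finite Q"
    using sa by (simp add: safety_automaton_def)
  ultimately show ?thesis
    using card_inj_on_le by fastforce
qed

definition zeros_ones :: "nat \<Rightarrow> nat word" where
  "zeros_ones k = (\<lambda>t. if t < k then 0 else 1)"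

lemma zeros_ones_omega_words: "zeros_ones k \<in> omega_words {0, 1}"
  by (simp add: omega_words_def zeros_ones_def)

lemma zeros_ones_lasso: "replicate k 0 \<frown> [1]\<^sup>\<omega> = zeros_ones k"
  by (rule ext) (simp add: conc_def zeros_ones_def)

lemma zeros_ones_in_lassos_n:
  "zeros_ones k \<in> lassos_n {0, 1} (Suc k) (range zeros_ones)"
proof -
  have "set (replicate k 0) \<subseteq> {0, 1}" "set [1] \<subseteq> {0, 1}" "[1] \<noteq> []"
    and "length (replicate k 0) + length [1] = Suc k"
    by auto
  then show ?thesis
    unfolding lassos_n_def using zeros_ones_lasso[of k, symmetric] by blast
qed

lemma zeros_not_in_range_zeros_ones: "(\<lambda>_. 0) \<notin> range zeros_ones"
proof
  assume "(\<lambda>_. 0) \<in> range zeros_ones"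
  then obtain k where "(\<lambda>_. 0) = zeros_ones k"
    by blast
  then have "zeros_ones k k = 0"
    by metis
  then show False
    by (simp add: zeros_ones_def)
qed

lemma zeros_ones_pump:
  assumes "i < j" "j \<le> k"
  shows "zeros_ones k \<circ> loop_index i j = (\<lambda>_. 0)"
proof -
  have "loop_index i j t < k" for t
    using loop_index_less[OF \<open>i < j\<close>] \<open>j \<le> k\<close> less_le_trans by blast
  then show ?thesis
    by (simp add: zeros_ones_def fun_eq_iff)
qed

theorem theorem4:
  shows "\<exists>(\<Sigma> :: nat set) \<phi>. finite \<Sigma> \<and> \<phi> \<subseteq> omega_words \<Sigma> \<and>
    (\<forall>n Q Q0 \<delta>. safety_automaton \<Sigma> Q Q0 \<delta> \<and> sa_lang \<Sigma> Q0 \<delta> \<subseteq> \<phi> \<and>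
        lassos_n \<Sigma> n (sa_lang \<Sigma> Q0 \<delta>) = lassos_n \<Sigma> n \<phi>
      \<longrightarrow> card Q \<ge> n)"
proof (intro exI conjI allI impI)
  show "finite {0::nat, 1}" by simp
  show "range zeros_ones \<subseteq> omega_words {0, 1}"
    using zeros_ones_omega_words by blast
  fix n Q Q0 \<delta>
  assume "safety_automaton {0, 1} Q Q0 \<delta> \<and> sa_lang {0, 1} Q0 \<delta> \<subseteq> range zeros_ones \<and>
    lassos_n {0, 1} n (sa_lang {0, 1} Q0 \<delta>) = lassos_n {0, 1} n (range zeros_ones)"
  then have sa: "safety_automaton {0, 1} Q Q0 \<delta>"
    and sub: "sa_lang {0, 1} Q0 \<delta> \<subseteq> range zeros_ones"
    and lassos: "lassos_n {0, 1} n (sa_lang {0, 1} Q0 \<delta>) = lassos_n {0, 1} n (range zeros_ones)"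
    by blast+
  show "n \<le> card Q"
  proof (cases n)
    case 0
    then show ?thesis by simp
  next
    case (Suc k)
    have "zeros_ones k \<in> lassos_n {0, 1} n (sa_lang {0, 1} Q0 \<delta>)"
      using zeros_ones_in_lassos_n[of k] lassos Suc by simp
    then have "zeros_ones k \<in> sa_lang {0, 1} Q0 \<delta>"
      by (simp add: lassos_n_def)
    moreover have "zeros_ones k \<circ> loop_index i j \<notin> sa_lang {0, 1} Q0 \<delta>"
      if "i < j" "j < n" for i j
      using zeros_ones_pump[of i j k] that Suc sub zeros_not_in_range_zeros_ones by auto
    ultimately show ?thesis
      using card_states_ge_if_no_pump[OF sa] by blast
  qed
qed

end
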